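(* Let $\lambda$ be a finite or countable signature. A sequence $(\mathbf A_n)_{n\in\mathbb N}$ of finite $\lambda$-structures is FO-convergent if and only if the sequence $(\mu_{\mathbf A_n})_{n\in\mathbb N}$ of measures on $S_\lambda$ is weakly-$\ast$ convergent. Moreover, if $\mu_{\mathbf A_n}$ converges weakly-$\ast$ to $\mu$, then for every $\phi\in\mathrm{FO}(\lambda)$, $$\int_{S_\lambda}\mathbf 1_{K(\phi)}\,\mathrm d\mu=\lim_{n\to\infty}\langle\phi,\mathbf A_n\rangle.$$
   Context: $\mathrm{FO}(\lambda)$ denotes first-order formulas in signature $\lambda$ with free variables from $x_1,x_2,\dots$. For $\phi$ with free variables among $x_1,\dots,x_p$ and a finite $\lambda$-structure $\mathbf A$ with domain $A$, $\langle\phi,\mathbf A\rangle=|\{(v_1,\dots,v_p)\in A^p:\mathbf A\models\phi(v_1,\dots,v_p)\}|/|A|^p$; $(\mathbf A_n)$ is FO-convergent if $\langle\phi,\mathbf A_n\rangle$ converges for every $\phi\in\mathrm{FO}(\lambda)$. $S_\lambda$ is the Stone space (space of ultrafilters) of the Boolean algebra of formulas of $\mathrm{FO}(\lambda)$ modulo logical equivalence; for $\phi\in\mathrm{FO}(\lambda)$, $K(\phi)$ is the clopen set of ultrafilters containing the class of $\phi$. For a finite $\lambda$-structure $\mathbf A$, $\mu_{\mathbf A}$ is the regular Borel probability measure on $S_\lambda$ with $\mu_{\mathbf A}(K(\phi))=\langle\phi,\mathbf A\rangle$ for all $\phi$. Weak-$\ast$ convergence of measures $\mu_n$ means convergence of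 $\int f\,\mathrm d\mu_n$ for every continuous $f:S_\lambda\to\mathbb R$. *)

theory Defs
  imports "HOL-Probability.Probability"
begin

datatype 'r fo =
    Rel 'r "nat list"
  | Eq nat nat
  | Neg "'r fo"
  | Conj "'r fo" "'r fo"
  | Ex nat "'r fo"

fun wf_fo :: "'r set \<Rightarrow> ('r \<Rightarrow> nat) \<Rightarrow> 'r fo \<Rightarrow> bool" where
  "wf_fo Sig ar (Rel R xs) = (R \<in> Sig \<and> length xs = ar R)"
| "wf_fo Sig ar (Eq i j) = True"
| "wf_fo Sig ar (Neg \<phi>) = wf_fo Sig ar \<phi>"
| "wf_fo Sig ar (Conj \<phi> \<psi>) = (wf_fo Sig ar \<phi> \<and> wf_fo Sig ar \<psi>)"
| "wf_fo Sig ar (Ex x \<phi>) = wf_fo Sig ar \<phi>"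

fun fv :: "'r fo \<Rightarrow> nat set" where
  "fv (Rel R xs) = set xs"
| "fv (Eq i j) = {i, j}"
| "fv (Neg \<phi>) = fv \<phi>"
| "fv (Conj \<phi> \<psi>) = fv \<phi> \<union> fv \<psi>"
| "fv (Ex x \<phi>) = fv \<phi> - {x}"

type_synonym ('a, 'r) struct = "'a set \<times> ('r \<Rightarrow> 'a list set)"

definition is_struct :: "'r set \<Rightarrow> ('r \<Rightarrow> nat) \<Rightarrow> ('a, 'r) struct \<Rightarrow> bool" where
  "is_struct Sig ar A \<longleftrightarrow> fst A \<noteq> {} \<and>
     (\<forall>R\<in>Sig. snd A R \<subseteq> {xs. set xs \<subseteq> fst A \<and> length xs = ar R})"

definition is_finite_struct :: "'r set \<Rightarrow> ('r \<Rightarrow> nat) \<Rightarrow> ('a, 'r) struct \<Rightarrow> bool" where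
  "is_finite_struct Sig ar A \<longleftrightarrow> is_struct Sig ar A \<and> finite (fst A)"

fun sat :: "('a, 'r) struct \<Rightarrow> (nat \<Rightarrow> 'a) \<Rightarrow> 'r fo \<Rightarrow> bool" where
  "sat A v (Rel R xs) = (map v xs \<in> snd A R)"
| "sat A v (Eq i j) = (v i = v j)"
| "sat A v (Neg \<phi>) = (\<not> sat A v \<phi>)"
| "sat A v (Conj \<phi> \<psi>) = (sat A v \<phi> \<and> sat A v \<psi>)"
| "sat A v (Ex x \<phi>) = (\<exists>d\<in>fst A. sat A (v(x := d)) \<phi>)"

definition fv_bound :: "'r fo \<Rightarrow> nat" where
  "fv_bound \<phi> = (if fv \<phi> = {} then 0 else Suc (Max (fv \<phi>)))"

definition stone_pairing :: "'r fo \<Rightarrow> ('a, 'r) struct \<Rightarrow> real" where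
  "stone_pairing \<phi> A =
     real (card {v \<in> {..<fv_bound \<phi>} \<rightarrow>\<^sub>E fst A. sat A v \<phi>})
       / real (card (fst A)) ^ fv_bound \<phi>"

text \<open>By the downward
  Loewenheim-Skolem theorem (the signature is countable), it suffices to range over
  structures whose domain is a (finite or countably infinite) set of natural numbers.\<close>
definition entails :: "'r set \<Rightarrow> ('r \<Rightarrow> nat) \<Rightarrow> 'r fo \<Rightarrow> 'r fo \<Rightarrow> bool" where
  "entails Sig ar \<phi> \<psi> \<longleftrightarrow>
     (\<forall>(M :: (nat, 'r) struct) v. is_struct Sig ar M \<longrightarrow> range v \<subseteq> fst M \<longrightarrow>
        sat M v \<phi> \<longrightarrow> sat M v \<psi>)"

text \<open>Ultrafilters of the Lindenbaum algebra FO(lambda)/equivalence, represented by the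
  (equivalence-closed) set of formulas whose classes they contain.  The Boolean order is
  entailment, meet is conjunction, complement is negation.\<close>
definition is_ultrafilter :: "'r set \<Rightarrow> ('r \<Rightarrow> nat) \<Rightarrow> 'r fo set \<Rightarrow> bool" where
  "is_ultrafilter Sig ar U \<longleftrightarrow>
     U \<subseteq> {\<phi>. wf_fo Sig ar \<phi>} \<and>
     (\<forall>\<phi>\<in>U. \<forall>\<psi>. wf_fo Sig ar \<psi> \<and> entails Sig ar \<phi> \<psi> \<longrightarrow> \<psi> \<in> U) \<and>
     (\<forall>\<phi>\<in>U. \<forall>\<psi>\<in>U. Conj \<phi> \<psi> \<in> U) \<and>
     (\<exists>\<phi>. wf_fo Sig ar \<phi> \<and> \<phi> \<notin> U) \<and>
     (\<forall>\<phi>. wf_fo Sig ar \<phi> \<longrightarrow> \<phi> \<in> U \<or> Neg \<phi> \<in> U)"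

definition stone_space :: "'r set \<Rightarrow> ('r \<Rightarrow> nat) \<Rightarrow> 'r fo set set" where
  "stone_space Sig ar = {U. is_ultrafilter Sig ar U}"

definition K :: "'r set \<Rightarrow> ('r \<Rightarrow> nat) \<Rightarrow> 'r fo \<Rightarrow> 'r fo set set" where
  "K Sig ar \<phi> = {U \<in> stone_space Sig ar. \<phi> \<in> U}"

definition stone_top :: "'r set \<Rightarrow> ('r \<Rightarrow> nat) \<Rightarrow> 'r fo set topology" where
  "stone_top Sig ar = topology_generated_by {K Sig ar \<phi> | \<phi>. wf_fo Sig ar \<phi>}"

definition borel_sets_of :: "'a topology \<Rightarrow> 'a set set" where
  "borel_sets_of T = sigma_sets (topspace T) {U. openin T U}"

definition regular_borel_prob :: "'a topology \<Rightarrow> 'a measure \<Rightarrow> bool" where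
  "regular_borel_prob T M \<longleftrightarrow>
     prob_space M \<and> space M = topspace T \<and> sets M = borel_sets_of T \<and>
     (\<forall>B \<in> sets M.
        measure M B = (SUP C \<in> {C. compactin T C \<and> C \<subseteq> B}. measure M C) \<and>
        measure M B = (INF U \<in> {U. openin T U \<and> B \<subseteq> U}. measure M U))"

definition weak_star_convergent :: "'a topology \<Rightarrow> (nat \<Rightarrow> 'a measure) \<Rightarrow> bool" where
  "weak_star_convergent T \<mu> \<longleftrightarrow>
     (\<forall>f. continuous_map T euclideanreal f \<longrightarrow> convergent (\<lambda>n. integral\<^sup>L (\<mu> n) f))"

definition weak_star_converges_to :: "'a topology \<Rightarrow> (nat \<Rightarrow> 'a measure) \<Rightarrow> 'a measure \<Rightarrow> bool" where
  "weak_star_converges_to T \<mu> \<nu> \<longleftrightarrow>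
     (\<forall>f. continuous_map T euclideanreal f \<longrightarrow>
        (\<lambda>n. integral\<^sup>L (\<mu> n) f) \<longlonglongrightarrow> integral\<^sup>L \<nu> f)"

definition FO_convergent :: "'r set \<Rightarrow> ('r \<Rightarrow> nat) \<Rightarrow> (nat \<Rightarrow> ('a, 'r) struct) \<Rightarrow> bool" where
  "FO_convergent Sig ar A \<longleftrightarrow>
     (\<forall>\<phi>. wf_fo Sig ar \<phi> \<longrightarrow> convergent (\<lambda>n. stone_pairing \<phi> (A n)))"

definition is_stone_measure_of :: "'r set \<Rightarrow> ('r \<Rightarrow> nat) \<Rightarrow> ('a, 'r) struct \<Rightarrow> 'r fo set measure \<Rightarrow> bool" where
  "is_stone_measure_of Sig ar A \<mu> \<longleftrightarrow>
     regular_borel_prob (stone_top Sig ar) \<mu> \<and>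
     (\<forall>\<phi>. wf_fo Sig ar \<phi> \<longrightarrow> measure \<mu> (K Sig ar \<phi>) = stone_pairing \<phi> A)"

end

theory Submission
  imports Defs
begin

text \<open>The sets K(\<phi>) are open, their complements are again of this form, and they form a basis of
  the Stone topology. Hence indicators of K(\<phi>) are continuous functions whose \<mu>_A-integral is
  \<langle>\<phi>, A\<rangle>, which gives weak-* \<Rightarrow> FO-convergence together with the formula for the limit.
  Conversely, since every finitely satisfiable set of formulas extends to an ultrafilter (Zorn),
  every cover of S_\<lambda> by sets K(\<phi>) has a finite subcover; so a continuous f is uniformly
  approximated by a step function \<Sum> c_i 1_{K(\<phi>_i)} with disjoint K(\<phi>_i), and FO-convergence makes
  the integrals of f a Cauchy sequence.\<close>

section \<open>Finite satisfiability and ultrafilters\<close>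

definition satisfiable :: "'r set \<Rightarrow> ('r \<Rightarrow> nat) \<Rightarrow> 'r fo set \<Rightarrow> bool" where
  "satisfiable Sig ar S \<longleftrightarrow>
     (\<exists>(M :: (nat, 'r) struct) v. is_struct Sig ar M \<and> range v \<subseteq> fst M \<and> (\<forall>\<theta>\<in>S. sat M v \<theta>))"

definition finitely_satisfiable :: "'r set \<Rightarrow> ('r \<Rightarrow> nat) \<Rightarrow> 'r fo set \<Rightarrow> bool" where
  "finitely_satisfiable Sig ar S \<longleftrightarrow>
     S \<subseteq> {\<phi>. wf_fo Sig ar \<phi>} \<and> (\<forall>S'. S' \<subseteq> S \<longrightarrow> finite S' \<longrightarrow> satisfiable Sig ar S')"

lemma satisfiableI:
  fixes M :: "(nat, 'r) struct"
  assumes "is_struct Sig ar M" "range v \<subseteq> fst M" "\<And>\<theta>. \<theta> \<in> S \<Longrightarrow> sat M v \<theta>"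
  shows "satisfiable Sig ar S"
  using assms unfolding satisfiable_def by blast

lemma satisfiable_subset: "satisfiable Sig ar T \<Longrightarrow> S \<subseteq> T \<Longrightarrow> satisfiable Sig ar S"
  unfolding satisfiable_def by blast

lemma ultrafilter_finitely_satisfiable:
  assumes U: "is_ultrafilter Sig ar U"
  shows "finitely_satisfiable Sig ar U"
proof -
  have "satisfiable Sig ar S" if "finite S" "S \<subseteq> U" for S
  proof -
    have "\<exists>\<theta>\<in>U. \<forall>\<psi>\<in>S. entails Sig ar \<theta> \<psi>"
      using that
    proof (induction S rule: finite_induct)
      case empty
      have "Eq 0 0 \<in> U \<or> Neg (Eq 0 0) \<in> U"
        using U unfolding is_ultrafilter_def by simp
      then show ?case by blast
    next
      case (insert \<psi> S)
      then obtain \<theta> where \<theta>: "\<theta> \<in> U" "\<forall>\<xi>\<in>S. entails Sig ar \<theta> \<xi>" by auto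
      have "Conj \<theta> \<psi> \<in> U" using U \<theta>(1) insert.prems unfolding is_ultrafilter_def by auto
      moreover have "\<forall>\<xi>\<in>insert \<psi> S. entails Sig ar (Conj \<theta> \<psi>) \<xi>"
        using \<theta>(2) unfolding entails_def by auto
      ultimately show ?case by blast
    qed
    then obtain \<theta> where \<theta>: "\<theta> \<in> U" "\<forall>\<psi>\<in>S. entails Sig ar \<theta> \<psi>" by blast
    obtain \<phi> where "wf_fo Sig ar \<phi>" "\<phi> \<notin> U" using U unfolding is_ultrafilter_def by blast
    \<comment> \<open>an upward closed U that misses \<phi> cannot contain an unsatisfiable \<theta>\<close>
    then have "\<not> entails Sig ar \<theta> \<phi>" using U \<theta>(1) unfolding is_ultrafilter_def by blast
    then show ?thesis using \<theta>(2) unfolding entails_def satisfiable_def by blast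
  qed
  then show ?thesis
    using U unfolding finitely_satisfiable_def is_ultrafilter_def by blast
qed

lemma ultrafilter_not_Neg:
  assumes "is_ultrafilter Sig ar U" "\<phi> \<in> U"
  shows "Neg \<phi> \<notin> U"
proof
  assume "Neg \<phi> \<in> U"
  moreover have "finitely_satisfiable Sig ar U"
    using assms(1) by (rule ultrafilter_finitely_satisfiable)
  ultimately have "satisfiable Sig ar {\<phi>, Neg \<phi>}"
    using assms(2) unfolding finitely_satisfiable_def by simp
  then show False unfolding satisfiable_def by auto
qed

lemma finitely_satisfiable_insert_consequence:
  assumes S: "finitely_satisfiable Sig ar S" and \<theta>: "wf_fo Sig ar \<theta>"
    and S0: "finite S0" "S0 \<subseteq> S"
    and consequence: "\<And>(M :: (nat, 'r) struct) v. is_struct Sig ar M \<Longrightarrow> range v \<subseteq> fst M \<Longrightarrow>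
        (\<forall>\<xi>\<in>S0. sat M v \<xi>) \<Longrightarrow> sat M v \<theta>"
  shows "finitely_satisfiable Sig ar (insert \<theta> S)"
  unfolding finitely_satisfiable_def
proof (intro conjI allI impI)
  show "insert \<theta> S \<subseteq> {\<phi>. wf_fo Sig ar \<phi>}"
    using S \<theta> unfolding finitely_satisfiable_def by blast
  fix S' assume "S' \<subseteq> insert \<theta> S" "finite S'"
  then have "S0 \<union> (S' - {\<theta>}) \<subseteq> S" "finite (S0 \<union> (S' - {\<theta>}))"
    using S0 by auto
  then obtain M :: "(nat, 'r) struct" and v where M: "is_struct Sig ar M" "range v \<subseteq> fst M"
      and sat: "\<forall>\<xi>\<in>S0 \<union> (S' - {\<theta>}). sat M v \<xi>"
    using S unfolding finitely_satisfiable_def satisfiable_def by blast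
  then have "sat M v \<theta>" using consequence by blast
  with M sat show "satisfiable Sig ar S'" by (intro satisfiableI) auto
qed

lemma not_finitely_satisfiable_insertE:
  assumes S: "finitely_satisfiable Sig ar S" and \<phi>: "wf_fo Sig ar \<phi>"
    and not_fs: "\<not> finitely_satisfiable Sig ar (insert \<phi> S)"
  obtains S0 where "S0 \<subseteq> S" "finite S0" "\<not> satisfiable Sig ar (insert \<phi> S0)"
proof -
  have "insert \<phi> S \<subseteq> {\<phi>. wf_fo Sig ar \<phi>}"
    using S \<phi> unfolding finitely_satisfiable_def by blast
  then have "\<not> (\<forall>S'. S' \<subseteq> insert \<phi> S \<longrightarrow> finite S' \<longrightarrow> satisfiable Sig ar S')"
    using not_fs unfolding finitely_satisfiable_def by simp
  then obtain S' where S': "S' \<subseteq> insert \<phi> S" "finite S'" "\<not> satisfiable Sig ar S'"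
    by blast
  show thesis
  proof (rule that)
    show "S' - {\<phi>} \<subseteq> S" "finite (S' - {\<phi>})" using S'(1,2) by auto
    show "\<not> satisfiable Sig ar (insert \<phi> (S' - {\<phi>}))"
    proof
      assume "satisfiable Sig ar (insert \<phi> (S' - {\<phi>}))"
      then have "satisfiable Sig ar S'" by (rule satisfiable_subset) blast
      with S'(3) show False ..
    qed
  qed
qed

lemma finitely_satisfiable_insert_or_Neg:
  fixes Sig :: "'r set"
  assumes S: "finitely_satisfiable Sig ar S" and \<phi>: "wf_fo Sig ar \<phi>"
  shows "finitely_satisfiable Sig ar (insert \<phi> S) \<or> finitely_satisfiable Sig ar (insert (Neg \<phi>) S)"
proof (rule ccontr)
  assume "\<not> ?thesis"
  then have not_fs: "\<not> finitely_satisfiable Sig ar (insert \<phi> S)"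
    and not_fs_Neg: "\<not> finitely_satisfiable Sig ar (insert (Neg \<phi>) S)" by simp_all
  obtain S1 where S1: "S1 \<subseteq> S" "finite S1" "\<not> satisfiable Sig ar (insert \<phi> S1)"
    using not_finitely_satisfiable_insertE[OF S \<phi> not_fs] .
  have "wf_fo Sig ar (Neg \<phi>)" using \<phi> by simp
  then obtain S2 where S2: "S2 \<subseteq> S" "finite S2" "\<not> satisfiable Sig ar (insert (Neg \<phi>) S2)"
    using not_finitely_satisfiable_insertE[OF S _ not_fs_Neg] by blast
  have "S1 \<union> S2 \<subseteq> S" "finite (S1 \<union> S2)" using S1 S2 by auto
  then have "satisfiable Sig ar (S1 \<union> S2)"
    using S unfolding finitely_satisfiable_def by blast
  then obtain M :: "(nat, 'r) struct" and v where M: "is_struct Sig ar M" "range v \<subseteq> fst M"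
      and sat: "\<forall>\<xi>\<in>S1 \<union> S2. sat M v \<xi>"
    unfolding satisfiable_def by blast
  show False
  proof (cases "sat M v \<phi>")
    case True
    with M sat have "satisfiable Sig ar (insert \<phi> S1)" by (intro satisfiableI) auto
    with S1(3) show False ..
  next
    case False
    with M sat have "satisfiable Sig ar (insert (Neg \<phi>) S2)" by (intro satisfiableI) auto
    with S2(3) show False ..
  qed
qed

lemma maximal_finitely_satisfiable_ultrafilter:
  assumes S: "finitely_satisfiable Sig ar S"
    and maximal: "\<And>X. finitely_satisfiable Sig ar X \<Longrightarrow> S \<subseteq> X \<Longrightarrow> X = S"
  shows "is_ultrafilter Sig ar S"
proof -
  have mem: "\<theta> \<in> S" if "finitely_satisfiable Sig ar (insert \<theta> S)" for \<theta>
    using maximal[OF that] by blast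
  show ?thesis
    unfolding is_ultrafilter_def
  proof (intro conjI ballI allI impI)
    show "S \<subseteq> {\<phi>. wf_fo Sig ar \<phi>}" using S unfolding finitely_satisfiable_def by blast
    show "\<psi> \<in> S" if "\<phi> \<in> S" "wf_fo Sig ar \<psi> \<and> entails Sig ar \<phi> \<psi>" for \<phi> \<psi>
      using that by (intro mem finitely_satisfiable_insert_consequence[OF S, of _ "{\<phi>}"])
        (auto simp: entails_def)
    show "Conj \<phi> \<psi> \<in> S" if "\<phi> \<in> S" "\<psi> \<in> S" for \<phi> \<psi>
    proof (intro mem finitely_satisfiable_insert_consequence[OF S, of _ "{\<phi>, \<psi>}"])
      show "wf_fo Sig ar (Conj \<phi> \<psi>)"
        using S that unfolding finitely_satisfiable_def by auto
    qed (use that in auto)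
    have "\<not> satisfiable Sig ar {Neg (Eq 0 0)}" unfolding satisfiable_def by simp
    then have "Neg (Eq 0 0) \<notin> S" using S unfolding finitely_satisfiable_def by blast
    then show "\<exists>\<phi>. wf_fo Sig ar \<phi> \<and> \<phi> \<notin> S" by (intro exI[of _ "Neg (Eq 0 0)"]) simp
    show "\<phi> \<in> S \<or> Neg \<phi> \<in> S" if "wf_fo Sig ar \<phi>" for \<phi>
      using finitely_satisfiable_insert_or_Neg[OF S that] mem by blast
  qed
qed

lemma finitely_satisfiable_Union_chain:
  assumes "C \<noteq> {}" "subset.chain {S. finitely_satisfiable Sig ar S} C"
  shows "finitely_satisfiable Sig ar (\<Union>C)"
proof -
  have C: "\<And>S. S \<in> C \<Longrightarrow> finitely_satisfiable Sig ar S"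
    using assms(2) unfolding subset_chain_def by blast
  have "satisfiable Sig ar S'" if S': "S' \<subseteq> \<Union>C" "finite S'" for S'
  proof -
    obtain S where "S \<in> C" "S' \<subseteq> S"
      using finite_subset_Union_chain[OF S'(2,1) assms] by blast
    then show ?thesis using C S'(2) unfolding finitely_satisfiable_def by blast
  qed
  moreover have "\<Union>C \<subseteq> {\<phi>. wf_fo Sig ar \<phi>}"
    using C unfolding finitely_satisfiable_def by blast
  ultimately show ?thesis unfolding finitely_satisfiable_def by blast
qed

lemma finitely_satisfiable_extends_to_ultrafilter:
  assumes \<Psi>: "finitely_satisfiable Sig ar \<Psi>"
  obtains U where "is_ultrafilter Sig ar U" "\<Psi> \<subseteq> U"
proof -
  define \<A> where "\<A> = {S. finitely_satisfiable Sig ar S \<and> \<Psi> \<subseteq> S}"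
  have chain_bounded: "\<exists>U\<in>\<A>. \<forall>X\<in>C. X \<subseteq> U" if C: "subset.chain \<A> C" for C
  proof (cases "C = {}")
    case True
    then show ?thesis using \<Psi> unfolding \<A>_def by auto
  next
    case False
    then obtain S0 where "S0 \<in> C" by blast
    have C_\<A>: "C \<subseteq> \<A>" using C by (simp add: subset_chain_def)
    with \<open>S0 \<in> C\<close> have "\<Psi> \<subseteq> \<Union>C" unfolding \<A>_def by blast
    moreover have "subset.chain {S. finitely_satisfiable Sig ar S} C"
      using C C_\<A> unfolding subset_chain_def \<A>_def by blast
    then have "finitely_satisfiable Sig ar (\<Union>C)"
      by (rule finitely_satisfiable_Union_chain[OF False])
    ultimately have "\<Union>C \<in> \<A>" unfolding \<A>_def by blast
    then show ?thesis by blast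
  qed
  obtain S where S: "S \<in> \<A>" and maximal: "\<And>X. X \<in> \<A> \<Longrightarrow> S \<subseteq> X \<Longrightarrow> X = S"
    using subset_Zorn[OF chain_bounded] by blast
  have "is_ultrafilter Sig ar S"
  proof (rule maximal_finitely_satisfiable_ultrafilter)
    show "finitely_satisfiable Sig ar S" using S unfolding \<A>_def by simp
    show "X = S" if "finitely_satisfiable Sig ar X" "S \<subseteq> X" for X
      using that S by (intro maximal) (auto simp: \<A>_def)
  qed
  moreover have "\<Psi> \<subseteq> S" using S unfolding \<A>_def by simp
  ultimately show thesis by (rule that)
qed

section \<open>The Stone topology\<close>

lemma K_subset_stone_space: "K Sig ar \<phi> \<subseteq> stone_space Sig ar"
  unfolding K_def by blast

lemma K_Neg:
  assumes "wf_fo Sig ar \<phi>"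
  shows "K Sig ar (Neg \<phi>) = stone_space Sig ar - K Sig ar \<phi>"
proof -
  have "Neg \<phi> \<in> U \<longleftrightarrow> \<phi> \<notin> U" if "U \<in> stone_space Sig ar" for U
  proof -
    have U: "is_ultrafilter Sig ar U" using that by (simp add: stone_space_def)
    then have "\<phi> \<in> U \<or> Neg \<phi> \<in> U" using assms unfolding is_ultrafilter_def by simp
    with ultrafilter_not_Neg[OF U] show ?thesis by blast
  qed
  then show ?thesis unfolding K_def by blast
qed

lemma K_Conj:
  assumes "wf_fo Sig ar \<phi>" "wf_fo Sig ar \<psi>"
  shows "K Sig ar (Conj \<phi> \<psi>) = K Sig ar \<phi> \<inter> K Sig ar \<psi>"
proof -
  have "Conj \<phi> \<psi> \<in> U \<longleftrightarrow> \<phi> \<in> U \<and> \<psi> \<in> U" if "U \<in> stone_space Sig ar" for U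
  proof -
    have U: "is_ultrafilter Sig ar U" using that by (simp add: stone_space_def)
    have "entails Sig ar (Conj \<phi> \<psi>) \<phi>" "entails Sig ar (Conj \<phi> \<psi>) \<psi>"
      unfolding entails_def by auto
    then show ?thesis using U assms unfolding is_ultrafilter_def by blast
  qed
  then show ?thesis unfolding K_def by blast
qed

lemma K_true: "K Sig ar (Eq 0 0) = stone_space Sig ar"
proof -
  have "Neg (Eq 0 0) \<notin> U" if "U \<in> stone_space Sig ar" for U
  proof
    assume "Neg (Eq 0 0) \<in> U"
    moreover have "finitely_satisfiable Sig ar U"
      using that by (simp add: stone_space_def ultrafilter_finitely_satisfiable)
    ultimately have "satisfiable Sig ar {Neg (Eq 0 0)}" unfolding finitely_satisfiable_def by simp
    then show False by (simp add: satisfiable_def)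
  qed
  then have "K Sig ar (Neg (Eq 0 0)) = {}" unfolding K_def by blast
  then show ?thesis using K_Neg[of Sig ar "Eq 0 0"] K_subset_stone_space[of Sig ar "Eq 0 0"] by auto
qed

definition stone_definable :: "'r set \<Rightarrow> ('r \<Rightarrow> nat) \<Rightarrow> 'r fo set set set" where
  "stone_definable Sig ar = {K Sig ar \<phi> | \<phi>. wf_fo Sig ar \<phi>}"

lemma K_stone_definable: "wf_fo Sig ar \<phi> \<Longrightarrow> K Sig ar \<phi> \<in> stone_definable Sig ar"
  unfolding stone_definable_def by blast

lemma algebra_stone_definable: "algebra (stone_space Sig ar) (stone_definable Sig ar)"
  unfolding algebra_iff_Un
proof (intro conjI ballI)
  show "stone_definable Sig ar \<subseteq> Pow (stone_space Sig ar)"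
    using K_subset_stone_space unfolding stone_definable_def by blast
  have "K Sig ar (Neg (Eq 0 0)) = {}" by (simp add: K_Neg K_true)
  then show "{} \<in> stone_definable Sig ar"
    by (metis K_stone_definable wf_fo.simps(2,3))
  show "stone_space Sig ar - D \<in> stone_definable Sig ar" if "D \<in> stone_definable Sig ar" for D
    using that K_Neg unfolding stone_definable_def by fastforce
  show "D \<union> E \<in> stone_definable Sig ar"
    if DE: "D \<in> stone_definable Sig ar" "E \<in> stone_definable Sig ar" for D E
  proof -
    obtain \<phi> \<psi> where \<phi>\<psi>: "wf_fo Sig ar \<phi>" "wf_fo Sig ar \<psi>" "D = K Sig ar \<phi>" "E = K Sig ar \<psi>"
      using DE unfolding stone_definable_def by blast
    then have "K Sig ar (Neg (Conj (Neg \<phi>) (Neg \<psi>))) = D \<union> E"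
      using K_subset_stone_space by (auto simp: K_Neg K_Conj)
    then show ?thesis using \<phi>\<psi> K_stone_definable[of Sig ar "Neg (Conj (Neg \<phi>) (Neg \<psi>))"] by simp
  qed
qed

lemma topspace_stone_top: "topspace (stone_top Sig ar) = stone_space Sig ar"
proof -
  have "\<Union>{K Sig ar \<phi> | \<phi>. wf_fo Sig ar \<phi>} \<subseteq> stone_space Sig ar"
    using K_subset_stone_space by blast
  moreover have "K Sig ar (Eq 0 0) \<in> {K Sig ar \<phi> | \<phi>. wf_fo Sig ar \<phi>}" by auto
  ultimately have "\<Union>{K Sig ar \<phi> | \<phi>. wf_fo Sig ar \<phi>} = stone_space Sig ar"
    using K_true[of Sig ar] by blast
  then show ?thesis unfolding stone_top_def by simp
qed

lemma openin_K: "wf_fo Sig ar \<phi> \<Longrightarrow> openin (stone_top Sig ar) (K Sig ar \<phi>)"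
  unfolding stone_top_def by (rule topology_generated_by_Basis) blast

lemma openin_stone_topE:
  assumes "openin (stone_top Sig ar) W" "U \<in> W"
  obtains \<phi> where "wf_fo Sig ar \<phi>" "U \<in> K Sig ar \<phi>" "K Sig ar \<phi> \<subseteq> W"
proof -
  have "generate_topology_on {K Sig ar \<phi> | \<phi>. wf_fo Sig ar \<phi>} W"
    using assms(1) unfolding stone_top_def by (rule openin_topology_generated_by)
  then have "\<forall>U\<in>W. \<exists>\<phi>. wf_fo Sig ar \<phi> \<and> U \<in> K Sig ar \<phi> \<and> K Sig ar \<phi> \<subseteq> W"
  proof (induction rule: generate_topology_on.induct)
    case Empty
    then show ?case by simp
  next
    case (Int W1 W2)
    show ?case
    proof
      fix U assume "U \<in> W1 \<inter> W2"
      then obtain \<phi> \<psi> where "wf_fo Sig ar \<phi>" "U \<in> K Sig ar \<phi>" "K Sig ar \<phi> \<subseteq> W1"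
          and "wf_fo Sig ar \<psi>" "U \<in> K Sig ar \<psi>" "K Sig ar \<psi> \<subseteq> W2"
        using Int.IH by blast
      then show "\<exists>\<xi>. wf_fo Sig ar \<xi> \<and> U \<in> K Sig ar \<xi> \<and> K Sig ar \<xi> \<subseteq> W1 \<inter> W2"
        by (intro exI[of _ "Conj \<phi> \<psi>"]) (auto simp: K_Conj)
    qed
  next
    case (UN \<W>)
    show ?case
    proof
      fix U assume "U \<in> \<Union>\<W>"
      then obtain W where "W \<in> \<W>" "U \<in> W" by blast
      with UN.IH obtain \<phi> where "wf_fo Sig ar \<phi>" "U \<in> K Sig ar \<phi>" "K Sig ar \<phi> \<subseteq> W" by blast
      with \<open>W \<in> \<W>\<close> show "\<exists>\<phi>. wf_fo Sig ar \<phi> \<and> U \<in> K Sig ar \<phi> \<and> K Sig ar \<phi> \<subseteq> \<Union>\<W>" by blast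
    qed
  next
    case (Basis W)
    then show ?case by blast
  qed
  then show thesis using assms(2) that by blast
qed

lemma stone_space_K_subcover:
  assumes \<Phi>: "\<Phi> \<subseteq> {\<phi>. wf_fo Sig ar \<phi>}" and cover: "stone_space Sig ar \<subseteq> \<Union>(K Sig ar ` \<Phi>)"
  obtains \<Phi>' where "finite \<Phi>'" "\<Phi>' \<subseteq> \<Phi>" "stone_space Sig ar \<subseteq> \<Union>(K Sig ar ` \<Phi>')"
proof (rule ccontr)
  assume no_subcover: "\<not> thesis"
  note finite_subcover = that
  \<comment> \<open>otherwise the negations of \<Phi> are finitely satisfiable, and an ultrafilter containing them
      lies outside every K(\<phi>), \<phi> \<in> \<Phi>\<close>
  have "finitely_satisfiable Sig ar (Neg ` \<Phi>)"
    unfolding finitely_satisfiable_def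
  proof (intro conjI allI impI)
    show "Neg ` \<Phi> \<subseteq> {\<phi>. wf_fo Sig ar \<phi>}" using \<Phi> by auto
    fix S' assume "S' \<subseteq> Neg ` \<Phi>" "finite S'"
    then obtain \<Phi>' where \<Phi>': "\<Phi>' \<subseteq> \<Phi>" "finite \<Phi>'" "S' = Neg ` \<Phi>'"
      by (meson finite_subset_image)
    then have "\<not> stone_space Sig ar \<subseteq> \<Union>(K Sig ar ` \<Phi>')"
      using no_subcover finite_subcover by blast
    then obtain U where U: "U \<in> stone_space Sig ar" "\<forall>\<phi>\<in>\<Phi>'. U \<notin> K Sig ar \<phi>" by blast
    have U_ultra: "is_ultrafilter Sig ar U" using U(1) unfolding stone_space_def by simp
    have "Neg \<phi> \<in> U" if "\<phi> \<in> \<Phi>'" for \<phi>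
    proof -
      have "wf_fo Sig ar \<phi>" using that \<Phi>'(1) \<Phi> by blast
      moreover have "\<phi> \<notin> U" using U that unfolding K_def by blast
      ultimately show ?thesis using U_ultra unfolding is_ultrafilter_def by blast
    qed
    then have "S' \<subseteq> U" using \<Phi>'(3) by blast
    moreover have "finitely_satisfiable Sig ar U"
      using U_ultra by (rule ultrafilter_finitely_satisfiable)
    ultimately show "satisfiable Sig ar S'"
      using \<open>finite S'\<close> unfolding finitely_satisfiable_def by simp
  qed
  then obtain U where U: "is_ultrafilter Sig ar U" "Neg ` \<Phi> \<subseteq> U"
    by (rule finitely_satisfiable_extends_to_ultrafilter)
  then have "U \<in> stone_space Sig ar" by (simp add: stone_space_def)
  then obtain \<phi> where "\<phi> \<in> \<Phi>" "\<phi> \<in> U" using cover unfolding K_def by blast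
  moreover have "Neg \<phi> \<in> U" using U(2) \<open>\<phi> \<in> \<Phi>\<close> by blast
  ultimately show False using U(1) ultrafilter_not_Neg by blast
qed

lemma continuous_map_indicator_clopen:
  assumes "openin X S" "openin X (topspace X - S)"
  shows "continuous_map X euclideanreal (indicator S :: 'a \<Rightarrow> real)"
  unfolding continuous_map_def
proof (intro conjI allI impI)
  fix W :: "real set"
  have "{x \<in> topspace X. indicator S x \<in> W} =
      (if 1 \<in> W then S else {}) \<union> (if 0 \<in> W then topspace X - S else {})"
    using openin_subset[OF assms(1)] by (auto simp: indicator_def)
  moreover have "openin X (if 1 \<in> W then S else {})" "openin X (if 0 \<in> W then topspace X - S else {})"
    using assms by simp_all
  ultimately show "openin X {x \<in> topspace X. (indicator S x :: real) \<in> W}"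
    by (simp add: openin_Un)
qed auto

lemma continuous_map_indicator_K:
  assumes "wf_fo Sig ar \<phi>"
  shows "continuous_map (stone_top Sig ar) euclideanreal (indicator (K Sig ar \<phi>) :: 'r fo set \<Rightarrow> real)"
proof (rule continuous_map_indicator_clopen)
  show "openin (stone_top Sig ar) (K Sig ar \<phi>)" using assms by (rule openin_K)
  show "openin (stone_top Sig ar) (topspace (stone_top Sig ar) - K Sig ar \<phi>)"
    using assms openin_K[of Sig ar "Neg \<phi>"] by (simp add: K_Neg topspace_stone_top)
qed

section \<open>Approximation of continuous functions by definable step functions\<close>

lemma disjointed_step_function_approx:
  fixes f :: "'a \<Rightarrow> real"
  assumes oscillation: "\<And>i x y. i < m \<Longrightarrow> x \<in> A i \<Longrightarrow> y \<in> A i \<Longrightarrow> \<bar>f x - f y\<bar> \<le> \<epsilon>"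
    and x: "x \<in> (\<Union>i<m. A i)"
  shows "\<bar>f x - (\<Sum>i<m. f (SOME y. y \<in> disjointed A i) * indicator (disjointed A i) x)\<bar> \<le> \<epsilon>"
proof -
  define c where "c i = f (SOME y. y \<in> disjointed A i)" for i
  have "(\<Union>i<m. disjointed A i) = (\<Union>i<m. A i)"
    using finite_UN_disjointed_eq[of A m] by (simp only: atLeast0LessThan)
  then obtain k where k: "k < m" "x \<in> disjointed A k" using x by blast
  have "x \<notin> disjointed A i" if "i \<noteq> k" for i
    using that k(2) less_disjoint_disjointed[of i k A] less_disjoint_disjointed[of k i A]
    by (cases "i < k") auto
  then have "(\<Sum>i<m. c i * indicator (disjointed A i) x) = (\<Sum>i<m. if i = k then c k else 0)"
    using k(2) by (intro sum.cong) (auto simp: indicator_def)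
  also have "\<dots> = c k" using k(1) by simp
  finally have step: "(\<Sum>i<m. c i * indicator (disjointed A i) x) = c k" .
  have "(SOME y. y \<in> disjointed A k) \<in> disjointed A k" using k(2) by (rule someI)
  then have "x \<in> A k" "(SOME y. y \<in> disjointed A k) \<in> A k"
    using k(2) disjointed_subset[of A k] by blast+
  then have "\<bar>f x - c k\<bar> \<le> \<epsilon>" unfolding c_def by (rule oscillation[OF k(1)])
  then show ?thesis using step unfolding c_def by simp
qed

lemma stone_space_small_oscillation_cover:
  assumes f: "continuous_map (stone_top Sig ar) euclideanreal f" and \<epsilon>: "\<epsilon> > 0"
  obtains \<phi>s where "\<And>\<phi>. \<phi> \<in> set \<phi>s \<Longrightarrow> wf_fo Sig ar \<phi>"
    "\<And>\<phi> U V. \<phi> \<in> set \<phi>s \<Longrightarrow> U \<in> K Sig ar \<phi> \<Longrightarrow> V \<in> K Sig ar \<phi> \<Longrightarrow> \<bar>f U - f V\<bar> \<le> \<epsilon>"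
    "stone_space Sig ar \<subseteq> (\<Union>\<phi>\<in>set \<phi>s. K Sig ar \<phi>)"
proof -
  define \<Phi> where
    "\<Phi> = {\<phi>. wf_fo Sig ar \<phi> \<and> (\<forall>U\<in>K Sig ar \<phi>. \<forall>V\<in>K Sig ar \<phi>. \<bar>f U - f V\<bar> \<le> \<epsilon>)}"
  have \<Phi>_wf: "\<Phi> \<subseteq> {\<phi>. wf_fo Sig ar \<phi>}" unfolding \<Phi>_def by blast
  have "stone_space Sig ar \<subseteq> \<Union>(K Sig ar ` \<Phi>)"
  proof
    fix U assume "U \<in> stone_space Sig ar"
    then have "U \<in> {V \<in> topspace (stone_top Sig ar). f V \<in> ball (f U) (\<epsilon>/2)}"
      using \<epsilon> by (simp add: topspace_stone_top)
    moreover have "openin (stone_top Sig ar) {V \<in> topspace (stone_top Sig ar). f V \<in> ball (f U) (\<epsilon>/2)}"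
      by (rule openin_continuous_map_preimage[OF f]) simp
    ultimately obtain \<phi> where \<phi>: "wf_fo Sig ar \<phi>" "U \<in> K Sig ar \<phi>"
        "K Sig ar \<phi> \<subseteq> {V \<in> topspace (stone_top Sig ar). f V \<in> ball (f U) (\<epsilon>/2)}"
      by (elim openin_stone_topE)
    have "\<bar>f V - f W\<bar> \<le> \<epsilon>" if "V \<in> K Sig ar \<phi>" "W \<in> K Sig ar \<phi>" for V W
    proof -
      have "\<bar>f U - f V\<bar> < \<epsilon>/2" "\<bar>f U - f W\<bar> < \<epsilon>/2"
        using \<phi>(3) that by (auto simp: dist_real_def)
      then show ?thesis by linarith
    qed
    with \<phi>(1) have "\<phi> \<in> \<Phi>" unfolding \<Phi>_def by blast
    with \<phi>(2) show "U \<in> \<Union>(K Sig ar ` \<Phi>)" by blast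
  qed
  then obtain \<Phi>' where \<Phi>': "finite \<Phi>'" "\<Phi>' \<subseteq> \<Phi>" "stone_space Sig ar \<subseteq> \<Union>(K Sig ar ` \<Phi>')"
    by (rule stone_space_K_subcover[OF \<Phi>_wf])
  obtain \<phi>s where "set \<phi>s = \<Phi>'" using finite_list[OF \<Phi>'(1)] by blast
  with \<Phi>'(2,3) show thesis by (intro that) (auto simp: \<Phi>_def)
qed

lemma stone_definable_step_function_approx:
  assumes f: "continuous_map (stone_top Sig ar) euclideanreal f" and \<epsilon>: "\<epsilon> > 0"
  obtains D and m :: nat and c where "\<And>i. D i \<in> stone_definable Sig ar"
    "\<And>U. U \<in> stone_space Sig ar \<Longrightarrow> \<bar>f U - (\<Sum>i<m. c i * indicator (D i) U)\<bar> \<le> \<epsilon>"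
proof -
  obtain \<phi>s where \<phi>s_wf: "\<And>\<phi>. \<phi> \<in> set \<phi>s \<Longrightarrow> wf_fo Sig ar \<phi>"
    and \<phi>s_osc: "\<And>\<phi> U V. \<phi> \<in> set \<phi>s \<Longrightarrow> U \<in> K Sig ar \<phi> \<Longrightarrow> V \<in> K Sig ar \<phi> \<Longrightarrow> \<bar>f U - f V\<bar> \<le> \<epsilon>"
    and \<phi>s_cover: "stone_space Sig ar \<subseteq> (\<Union>\<phi>\<in>set \<phi>s. K Sig ar \<phi>)"
    using stone_space_small_oscillation_cover[OF f \<epsilon>] by blast
  interpret algebra "stone_space Sig ar" "stone_definable Sig ar"
    by (rule algebra_stone_definable)
  define A where "A i = (if i < length \<phi>s then K Sig ar (\<phi>s ! i) else {})" for i
  have A_osc: "\<bar>f U - f V\<bar> \<le> \<epsilon>" if "i < length \<phi>s" "U \<in> A i" "V \<in> A i" for i U V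
    using that \<phi>s_osc[OF nth_mem[OF that(1)]] unfolding A_def by simp
  have "A i \<in> stone_definable Sig ar" for i
    using \<phi>s_wf[OF nth_mem] by (simp add: A_def K_stone_definable)
  then have "range (disjointed A) \<subseteq> stone_definable Sig ar"
    by (intro range_disjointed_sets') blast
  moreover have cover: "stone_space Sig ar \<subseteq> (\<Union>i<length \<phi>s. A i)"
  proof
    fix U assume "U \<in> stone_space Sig ar"
    then obtain \<phi> where "\<phi> \<in> set \<phi>s" "U \<in> K Sig ar \<phi>" using \<phi>s_cover by blast
    then obtain i where "i < length \<phi>s" "U \<in> K Sig ar (\<phi>s ! i)" by (metis in_set_conv_nth)
    then show "U \<in> (\<Union>i<length \<phi>s. A i)" by (auto simp: A_def)
  qed
  ultimately show thesis
  proof (intro that)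
    fix U assume "U \<in> stone_space Sig ar"
    with cover show "\<bar>f U - (\<Sum>i<length \<phi>s. f (SOME y. y \<in> disjointed A i) * indicator (disjointed A i) U)\<bar> \<le> \<epsilon>"
      by (intro disjointed_step_function_approx[of "length \<phi>s" A] A_osc) blast+
  qed blast
qed

section \<open>Measures on the Stone space\<close>

lemma regular_borel_probD:
  assumes "regular_borel_prob T M"
  shows "prob_space M" "space M = topspace T" "sets M = borel_sets_of T"
  using assms unfolding regular_borel_prob_def by (rule conjunct1, rule conjunct1[OF conjunct2],
      rule conjunct1[OF conjunct2[OF conjunct2]])

lemma is_stone_measure_of_regular_borel_prob:
  "is_stone_measure_of Sig ar A M \<Longrightarrow> regular_borel_prob (stone_top Sig ar) M"
  unfolding is_stone_measure_of_def by (rule conjunct1)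

lemma space_stone_measure:
  "is_stone_measure_of Sig ar A M \<Longrightarrow> space M = stone_space Sig ar"
  using is_stone_measure_of_regular_borel_prob regular_borel_probD(2) topspace_stone_top by metis

lemma regular_borel_prob_openin_sets:
  assumes "regular_borel_prob T M" "openin T S"
  shows "S \<in> sets M"
proof -
  have "S \<in> sigma_sets (topspace T) {U. openin T U}"
    using assms(2) by (intro sigma_sets.Basic) simp
  then show ?thesis using regular_borel_probD(3)[OF assms(1)] by (simp add: borel_sets_of_def)
qed

lemma regular_borel_prob_continuous_measurable:
  assumes M: "regular_borel_prob T M" and f: "continuous_map T euclideanreal f"
  shows "f \<in> borel_measurable M"
proof (rule borel_measurableI)
  fix S :: "real set" assume "open S"
  then have "openin T {x \<in> topspace T. f x \<in> S}"
    by (intro openin_continuous_map_preimage[OF f]) simp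
  moreover have "f -` S \<inter> space M = {x \<in> topspace T. f x \<in> S}"
    using regular_borel_probD(2)[OF M] by blast
  ultimately show "f -` S \<inter> space M \<in> sets M"
    using regular_borel_prob_openin_sets[OF M] by simp
qed

lemma stone_definable_sets:
  assumes "regular_borel_prob (stone_top Sig ar) M" "D \<in> stone_definable Sig ar"
  shows "D \<in> sets M"
  using assms openin_K regular_borel_prob_openin_sets unfolding stone_definable_def by blast

lemma integral_indicator_K:
  assumes M: "is_stone_measure_of Sig ar A M" and \<phi>: "wf_fo Sig ar \<phi>"
  shows "integral\<^sup>L M (indicator (K Sig ar \<phi>)) = stone_pairing \<phi> A"
proof -
  have "K Sig ar \<phi> \<inter> space M = K Sig ar \<phi>"
    using space_stone_measure[OF M] K_subset_stone_space by blast
  then show ?thesis using M \<phi> unfolding is_stone_measure_of_def by simp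
qed

lemma FO_convergent_imp_convergent_step_integral:
  fixes c :: "nat \<Rightarrow> real"
  assumes \<mu>: "\<And>n. is_stone_measure_of Sig ar (A n) (\<mu> n)" and A: "FO_convergent Sig ar A"
    and D: "\<And>i. D i \<in> stone_definable Sig ar"
  shows "convergent (\<lambda>n. integral\<^sup>L (\<mu> n) (\<lambda>U. \<Sum>i<m. c i * indicator (D i) U))"
proof -
  have \<mu>_rbp: "regular_borel_prob (stone_top Sig ar) (\<mu> n)" for n
    using \<mu> by (rule is_stone_measure_of_regular_borel_prob)
  have \<mu>_prob: "prob_space (\<mu> n)" and D_sets: "D i \<in> sets (\<mu> n)" for n i
    using regular_borel_probD(1)[OF \<mu>_rbp] stone_definable_sets[OF \<mu>_rbp D] by blast+
  have "integral\<^sup>L (\<mu> n) (\<lambda>U. \<Sum>i<m. c i * indicator (D i) U) =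
      (\<Sum>i<m. integral\<^sup>L (\<mu> n) (\<lambda>U. c i * indicator (D i) U))" for n
  proof (rule Bochner_Integration.integral_sum)
    fix i
    have "emeasure (\<mu> n) (D i) < \<infinity>"
      using prob_space.finite_measure[OF \<mu>_prob]
      by (simp add: finite_measure.emeasure_finite less_top[symmetric])
    with D_sets have "integrable (\<mu> n) (indicator (D i) :: _ \<Rightarrow> real)"
      by (rule integrable_real_indicator)
    then show "integrable (\<mu> n) (\<lambda>U. c i * indicator (D i) U)" by simp
  qed
  then have "integral\<^sup>L (\<mu> n) (\<lambda>U. \<Sum>i<m. c i * indicator (D i) U) =
      (\<Sum>i<m. c i * integral\<^sup>L (\<mu> n) (indicator (D i)))" for n
    by simp
  moreover have "convergent (\<lambda>n. integral\<^sup>L (\<mu> n) (indicator (D i) :: _ \<Rightarrow> real))" for i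
  proof -
    obtain \<phi> where "wf_fo Sig ar \<phi>" "D i = K Sig ar \<phi>"
      using D[of i] unfolding stone_definable_def by blast
    then show ?thesis using A integral_indicator_K[OF \<mu>] unfolding FO_convergent_def by simp
  qed
  ultimately show ?thesis by (simp add: convergent_sum convergent_mult convergent_const)
qed

lemma abs_integral_diff_le_uniform:
  fixes f g :: "'a \<Rightarrow> real"
  assumes "prob_space M" "f \<in> borel_measurable M" "g \<in> borel_measurable M"
    and close: "\<And>x. x \<in> space M \<Longrightarrow> \<bar>f x - g x\<bar> \<le> \<epsilon>"
    and bounded: "\<And>x. x \<in> space M \<Longrightarrow> \<bar>g x\<bar> \<le> B"
  shows "\<bar>integral\<^sup>L M f - integral\<^sup>L M g\<bar> \<le> \<epsilon>"
proof -
  interpret prob_space M by fact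
  have g: "integrable M g"
    using assms(3) bounded by (intro integrable_const_bound[of _ B]) auto
  have "\<bar>f x\<bar> \<le> B + \<epsilon>" if "x \<in> space M" for x
    using close[OF that] bounded[OF that] by linarith
  then have f: "integrable M f"
    using assms(2) by (intro integrable_const_bound[of _ "B + \<epsilon>"]) auto
  have "\<bar>integral\<^sup>L M f - integral\<^sup>L M g\<bar> = \<bar>integral\<^sup>L M (\<lambda>x. f x - g x)\<bar>"
    using f g by simp
  also have "\<dots> \<le> integral\<^sup>L M (\<lambda>x. \<bar>f x - g x\<bar>)"
    using integral_norm_bound[of M "\<lambda>x. f x - g x"] by simp
  also have "\<dots> \<le> integral\<^sup>L M (\<lambda>x. \<epsilon>)"
    using f g close by (intro integral_mono) auto
  also have "\<dots> = \<epsilon>" using prob_space by simp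
  finally show ?thesis .
qed

lemma FO_convergent_imp_convergent_integral:
  assumes \<mu>: "\<And>n. is_stone_measure_of Sig ar (A n) (\<mu> n)" and A: "FO_convergent Sig ar A"
    and f: "continuous_map (stone_top Sig ar) euclideanreal f"
  shows "convergent (\<lambda>n. integral\<^sup>L (\<mu> n) f)"
  unfolding Cauchy_convergent_iff[symmetric]
proof (rule CauchyI)
  fix \<epsilon> :: real assume "\<epsilon> > 0"
  then have \<epsilon>4: "\<epsilon>/4 > 0" by simp
  obtain D and m :: nat and c where D: "\<And>i. D i \<in> stone_definable Sig ar"
    and approx: "\<And>U. U \<in> stone_space Sig ar \<Longrightarrow> \<bar>f U - (\<Sum>i<m. c i * indicator (D i) U)\<bar> \<le> \<epsilon>/4"
    by (rule stone_definable_step_function_approx[OF f \<epsilon>4]) blast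
  define g where "g U = (\<Sum>i<m. c i * indicator (D i) U :: real)" for U
  have "convergent (\<lambda>n. integral\<^sup>L (\<mu> n) g)"
    unfolding g_def using \<mu> A D by (rule FO_convergent_imp_convergent_step_integral)
  then have "Cauchy (\<lambda>n. integral\<^sup>L (\<mu> n) g)" by (simp add: Cauchy_convergent_iff)
  then have "\<exists>N. \<forall>m\<ge>N. \<forall>n\<ge>N. norm (integral\<^sup>L (\<mu> m) g - integral\<^sup>L (\<mu> n) g) < \<epsilon>/4"
    using \<epsilon>4 by (rule CauchyD)
  then obtain N where N: "\<forall>m\<ge>N. \<forall>n\<ge>N. norm (integral\<^sup>L (\<mu> m) g - integral\<^sup>L (\<mu> n) g) < \<epsilon>/4" ..
  have close: "\<bar>integral\<^sup>L (\<mu> n) f - integral\<^sup>L (\<mu> n) g\<bar> \<le> \<epsilon>/4" for n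
  proof (rule abs_integral_diff_le_uniform)
    have \<mu>_rbp: "regular_borel_prob (stone_top Sig ar) (\<mu> n)"
      using \<mu> by (rule is_stone_measure_of_regular_borel_prob)
    then show "prob_space (\<mu> n)" by (rule regular_borel_probD)
    show "f \<in> borel_measurable (\<mu> n)"
      using \<mu>_rbp f by (rule regular_borel_prob_continuous_measurable)
    show "g \<in> borel_measurable (\<mu> n)"
      unfolding g_def using stone_definable_sets[OF \<mu>_rbp D] by measurable
    show "\<bar>f U - g U\<bar> \<le> \<epsilon>/4" if "U \<in> space (\<mu> n)" for U
      using approx that space_stone_measure[OF \<mu>] unfolding g_def by simp
    show "\<bar>g U\<bar> \<le> (\<Sum>i<m. \<bar>c i\<bar>)" for U
      unfolding g_def by (rule order_trans[OF sum_abs sum_mono]) (auto simp: indicator_def)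
  qed
  have "norm (integral\<^sup>L (\<mu> m) f - integral\<^sup>L (\<mu> n) f) < \<epsilon>" if "m \<ge> N" "n \<ge> N" for m n
  proof -
    have "\<bar>integral\<^sup>L (\<mu> m) g - integral\<^sup>L (\<mu> n) g\<bar> < \<epsilon>/4" using N that by auto
    then show ?thesis using close[of m] close[of n] unfolding real_norm_def by linarith
  qed
  then show "\<exists>N. \<forall>m\<ge>N. \<forall>n\<ge>N. norm (integral\<^sup>L (\<mu> m) f - integral\<^sup>L (\<mu> n) f) < \<epsilon>" by blast
qed

theorem theorem2p16:
  fixes Sig :: "'r set" and ar :: "'r \<Rightarrow> nat"
    and A :: "nat \<Rightarrow> ('a, 'r) struct"
    and \<mu> :: "nat \<Rightarrow> 'r fo set measure"
  assumes "countable Sig"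
    and "\<And>n. is_finite_struct Sig ar (A n)"
    and "\<And>n. is_stone_measure_of Sig ar (A n) (\<mu> n)"
  shows "(FO_convergent Sig ar A \<longleftrightarrow> weak_star_convergent (stone_top Sig ar) \<mu>) \<and>
         (\<forall>\<nu>. regular_borel_prob (stone_top Sig ar) \<nu> \<longrightarrow>
           weak_star_converges_to (stone_top Sig ar) \<mu> \<nu> \<longrightarrow>
           (\<forall>\<phi>. wf_fo Sig ar \<phi> \<longrightarrow>
              (\<lambda>n. stone_pairing \<phi> (A n)) \<longlonglongrightarrow> integral\<^sup>L \<nu> (indicator (K Sig ar \<phi>))))"
proof (intro conjI iffI allI impI)
  show "weak_star_convergent (stone_top Sig ar) \<mu>" if "FO_convergent Sig ar A"
    unfolding weak_star_convergent_def
    by (intro allI impI FO_convergent_imp_convergent_integral[OF assms(3) that])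
next
  assume weak: "weak_star_convergent (stone_top Sig ar) \<mu>"
  show "FO_convergent Sig ar A"
    unfolding FO_convergent_def
  proof (intro allI impI)
    fix \<phi> assume \<phi>: "wf_fo Sig ar \<phi>"
    have "convergent (\<lambda>n. integral\<^sup>L (\<mu> n) (indicator (K Sig ar \<phi>) :: _ \<Rightarrow> real))"
      by (rule weak[unfolded weak_star_convergent_def, rule_format, OF continuous_map_indicator_K[OF \<phi>]])
    then show "convergent (\<lambda>n. stone_pairing \<phi> (A n))"
      using integral_indicator_K[OF assms(3) \<phi>] by simp
  qed
next
  fix \<nu> \<phi>
  assume weak: "weak_star_converges_to (stone_top Sig ar) \<mu> \<nu>" and \<phi>: "wf_fo Sig ar \<phi>"
  have "(\<lambda>n. integral\<^sup>L (\<mu> n) (indicator (K Sig ar \<phi>))) \<longlonglongrightarrow> integral\<^sup>L \<nu> (indicator (K Sig ar \<phi>) :: _ \<Rightarrow> real)"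
    by (rule weak[unfolded weak_star_converges_to_def, rule_format, OF continuous_map_indicator_K[OF \<phi>]])
  then show "(\<lambda>n. stone_pairing \<phi> (A n)) \<longlonglongrightarrow> integral\<^sup>L \<nu> (indicator (K Sig ar \<phi>))"
    unfolding integral_indicator_K[OF assms(3) \<phi>, symmetric] .
qed

end
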